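(* Let $M=(W,\bm{\Box},V)$ be a monotonic and transitive neighborhood model, $\Sigma$ a set of formulas closed under subformulas, and $M^{T}_f$ the transitive filtration of $M$ through $\Sigma$. Then its supplementation $M^{T\#}_f=(W_f,\bm{\Box}^{T\#}_f,V_f)$ is a filtration of $M$ through $\Sigma$, i.e. $\bm{\Box}^{T\#}_f\widetilde{|\varphi|}_M=\widetilde{|\Box\varphi|}_M$ for every formula $\Box\varphi\in\Sigma$.
   Context: A neighborhood model is $M=(W,\bm{\Box},V)$ with $W\neq\varnothing$, $\bm{\Box}:\mathcal P(W)\to\mathcal P(W)$, $V:Var\to\mathcal P(W)$; truth sets: $|p|_M=V(p)$, $|\neg\varphi|_M=W\setminus|\varphi|_M$, $|\varphi\wedge\psi|_M=|\varphi|_M\cap|\psi|_M$, $|\Box\varphi|_M=\bm{\Box}|\varphi|_M$. $M$ is transitive if $\bm{\Box}X\subseteq\bm{\Box}\bm{\Box}X$ for all $X$, monotonic if $X\subseteq Y$ implies $\bm{\Box}X\subseteq\bm{\Box}Y$. For $\Sigma$ closed under subformulas, $w\sim v$ iff $w,v$ satisfy the same formulas of $\Sigma$; $\widetilde w$ is the class of $w$, $W_f=\{\widetilde w:w\in W\}$, $\widetilde X=\{\widetilde w:w\in X\}$, $V_f(p)=\widetilde{|p|}_M$. A filtration of $M$ through $\Sigma$ is a model $(W_f,\bm{\Box}_f,V_f)$ with $\bm{\Box}_f\widetilde{|\varphi|}_M=\widetilde{|\Box\varphi|}_M$ whenever $\Box\varphi\in\Sigma$. The minimal filtration has $\bm{\Box}^{-}_fX=\widetilde{|\Box\varphi|}_M$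 if $X=\widetilde{|\varphi|}_M$ for some formula $\Box\varphi\in\Sigma$, and $\varnothing$ otherwise. For a function $\bm{\Box}':\mathcal P(U)\to\mathcal P(U)$, $\widehat{\bm{\Box}'}X=X$ if $X=\bm{\Box}'Y$ for some $Y$, and $\varnothing$ otherwise. The transitive filtration has $\bm{\Box}^{T}_fX=\bm{\Box}^{-}_fX\cup\widehat{\bm{\Box}^{-}_f}X$. The supplementation of a function $\bm{\Box}'$ is $\bm{\Box}'^{\#}X=\bigcup\{\bm{\Box}'Y:Y\subseteq X\}$; $\bm{\Box}^{T\#}_f$ denotes the supplementation of $\bm{\Box}^{T}_f$. *)

theory Defs
  imports Main
begin

datatype 'v fm = Var 'v | Neg "'v fm" | Conj "'v fm" "'v fm" | Box "'v fm"

fun subfms :: "'v fm \<Rightarrow> 'v fm set" where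
  "subfms (Var p) = {Var p}"
| "subfms (Neg a) = insert (Neg a) (subfms a)"
| "subfms (Conj a b) = insert (Conj a b) (subfms a \<union> subfms b)"
| "subfms (Box a) = insert (Box a) (subfms a)"

definition sub_closed :: "'v fm set \<Rightarrow> bool" where
  "sub_closed S \<longleftrightarrow> (\<forall>a\<in>S. subfms a \<subseteq> S)"

definition nbhd_model :: "'w set \<Rightarrow> ('w set \<Rightarrow> 'w set) \<Rightarrow> ('v \<Rightarrow> 'w set) \<Rightarrow> bool" where
  "nbhd_model W B V \<longleftrightarrow> W \<noteq> {} \<and> (\<forall>X. X \<subseteq> W \<longrightarrow> B X \<subseteq> W) \<and> (\<forall>p. V p \<subseteq> W)"

fun tset :: "'w set \<Rightarrow> ('w set \<Rightarrow> 'w set) \<Rightarrow> ('v \<Rightarrow> 'w set) \<Rightarrow> 'v fm \<Rightarrow> 'w set" where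
  "tset W B V (Var p) = V p"
| "tset W B V (Neg a) = W - tset W B V a"
| "tset W B V (Conj a b) = tset W B V a \<inter> tset W B V b"
| "tset W B V (Box a) = B (tset W B V a)"

definition transitive_nm :: "'w set \<Rightarrow> ('w set \<Rightarrow> 'w set) \<Rightarrow> bool" where
  "transitive_nm W B \<longleftrightarrow> (\<forall>X. X \<subseteq> W \<longrightarrow> B X \<subseteq> B (B X))"

definition monotonic_nm :: "'w set \<Rightarrow> ('w set \<Rightarrow> 'w set) \<Rightarrow> bool" where
  "monotonic_nm W B \<longleftrightarrow> (\<forall>X Y. X \<subseteq> Y \<and> Y \<subseteq> W \<longrightarrow> B X \<subseteq> B Y)"

definition cls :: "'w set \<Rightarrow> ('w set \<Rightarrow> 'w set) \<Rightarrow> ('v \<Rightarrow> 'w set) \<Rightarrow> 'v fm set \<Rightarrow> 'w \<Rightarrow> 'w set" where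
  "cls W B V S w = {u \<in> W. \<forall>a\<in>S. (w \<in> tset W B V a \<longleftrightarrow> u \<in> tset W B V a)}"

definition Wf :: "'w set \<Rightarrow> ('w set \<Rightarrow> 'w set) \<Rightarrow> ('v \<Rightarrow> 'w set) \<Rightarrow> 'v fm set \<Rightarrow> 'w set set" where
  "Wf W B V S = cls W B V S ` W"

definition tilde :: "'w set \<Rightarrow> ('w set \<Rightarrow> 'w set) \<Rightarrow> ('v \<Rightarrow> 'w set) \<Rightarrow> 'v fm set \<Rightarrow> 'w set \<Rightarrow> 'w set set" where
  "tilde W B V S X = cls W B V S ` X"

definition Vf :: "'w set \<Rightarrow> ('w set \<Rightarrow> 'w set) \<Rightarrow> ('v \<Rightarrow> 'w set) \<Rightarrow> 'v fm set \<Rightarrow> 'v \<Rightarrow> 'w set set" where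
  "Vf W B V S p = tilde W B V S (V p)"

definition box_min :: "'w set \<Rightarrow> ('w set \<Rightarrow> 'w set) \<Rightarrow> ('v \<Rightarrow> 'w set) \<Rightarrow> 'v fm set \<Rightarrow> 'w set set \<Rightarrow> 'w set set" where
  "box_min W B V S X =
     (if \<exists>a. Box a \<in> S \<and> X = tilde W B V S (tset W B V a)
      then tilde W B V S (tset W B V (Box (SOME a. Box a \<in> S \<and> X = tilde W B V S (tset W B V a))))
      else {})"

definition hat :: "'u set \<Rightarrow> ('u set \<Rightarrow> 'u set) \<Rightarrow> 'u set \<Rightarrow> 'u set" where
  "hat U B' X = (if \<exists>Y. Y \<subseteq> U \<and> X = B' Y then X else {})"

definition box_trans :: "'w set \<Rightarrow> ('w set \<Rightarrow> 'w set) \<Rightarrow> ('v \<Rightarrow> 'w set) \<Rightarrow> 'v fm set \<Rightarrow> 'w set set \<Rightarrow> 'w set set" where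
  "box_trans W B V S X = box_min W B V S X \<union> hat (Wf W B V S) (box_min W B V S) X"

definition supp :: "'u set \<Rightarrow> ('u set \<Rightarrow> 'u set) \<Rightarrow> 'u set \<Rightarrow> 'u set" where
  "supp U B' X = \<Union>{B' Y | Y. Y \<subseteq> X}"

definition is_filtration :: "'w set \<Rightarrow> ('w set \<Rightarrow> 'w set) \<Rightarrow> ('v \<Rightarrow> 'w set) \<Rightarrow> 'v fm set \<Rightarrow> ('w set set \<Rightarrow> 'w set set) \<Rightarrow> bool" where
  "is_filtration W B V S Bf \<longleftrightarrow>
     (\<forall>a. Box a \<in> S \<longrightarrow> Bf (tilde W B V S (tset W B V a)) = tilde W B V S (tset W B V (Box a)))"

end

theory Submission
  imports Defs
begin

text \<open>
  Every \<open>\<Sigma>\<close>-definable truth set is a union of \<open>\<sim>\<close>-classes, so \<open>\<sim>\<close>-images reflect inclusion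
  between truth sets of formulas in \<open>\<Sigma>\<close>. Hence, for \<open>\<box>\<phi> \<in> \<Sigma>\<close>, every value of the transitive
  filtration below \<open>|\<phi>|~\<close> is contained in \<open>|\<box>\<phi>|~\<close>: minimal-filtration values \<open>|\<box>\<psi>|~\<close> with
  \<open>|\<psi>| \<subseteq> |\<phi>|\<close> by monotonicity, and hat values \<open>|\<box>\<psi>|~ \<subseteq> |\<phi>|~\<close> because
  \<open>\<box>|\<psi>| \<subseteq> \<box>\<box>|\<psi>| \<subseteq> \<box>|\<phi>|\<close> by transitivity and monotonicity. So the union defining the
  supplementation at \<open>|\<phi>|~\<close> is attained at \<open>|\<phi>|~\<close> itself, where the minimal filtration
  already yields \<open>|\<box>\<phi>|~\<close>.
\<close>

lemma supp_eq_self: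
  assumes "\<And>Y. Y \<subseteq> X \<Longrightarrow> B' Y \<subseteq> B' X"
  shows "supp U B' X = B' X"
  using assms unfolding supp_def by blast

lemma hat_subset: "hat U B' X \<subseteq> X"
  by (simp add: hat_def)

lemma box_subset_box_if_box_subset:
  assumes "monotonic_nm W B" "transitive_nm W B"
    and "X \<subseteq> W" "Y \<subseteq> W" "B X \<subseteq> Y"
  shows "B X \<subseteq> B Y"
proof -
  have "B X \<subseteq> B (B X)" using assms(2,3) by (simp add: transitive_nm_def)
  also have "\<dots> \<subseteq> B Y" using assms(1,4,5) by (simp add: monotonic_nm_def)
  finally show ?thesis .
qed

lemma tset_subset: "nbhd_model W B V \<Longrightarrow> tset W B V a \<subseteq> W"
  by (induction a) (auto simp: nbhd_model_def)

lemma in_subfms_self: "a \<in> subfms a"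
  by (cases a) auto

lemma sub_closed_Box: "sub_closed S \<Longrightarrow> Box a \<in> S \<Longrightarrow> a \<in> S"
  unfolding sub_closed_def using in_subfms_self[of a] by fastforce

locale sigma_filtration =
  fixes W :: "'w set" and B :: "'w set \<Rightarrow> 'w set" and V :: "'v \<Rightarrow> 'w set" and S :: "'v fm set"
  assumes model: "nbhd_model W B V"
    and closed: "sub_closed S"
begin

abbreviation tr :: "'v fm \<Rightarrow> 'w set" where "tr \<equiv> tset W B V"
abbreviation tld :: "'w set \<Rightarrow> 'w set set" where "tld \<equiv> tilde W B V S"
abbreviation bmin :: "'w set set \<Rightarrow> 'w set set" where "bmin \<equiv> box_min W B V S"

lemma tr_subset: "tr a \<subseteq> W"
  using tset_subset[OF model] .

lemma tilde_subset_tilde_tr_iff: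
  assumes "X \<subseteq> W" "b \<in> S"
  shows "tld X \<subseteq> tld (tr b) \<longleftrightarrow> X \<subseteq> tr b"
proof
  assume le: "tld X \<subseteq> tld (tr b)"
  show "X \<subseteq> tr b"
  proof
    fix w assume "w \<in> X"
    with le obtain u where u: "u \<in> tr b" "cls W B V S w = cls W B V S u"
      by (auto simp: tilde_def)
    have "w \<in> cls W B V S w" using \<open>w \<in> X\<close> assms(1) by (auto simp: cls_def)
    then show "w \<in> tr b" using u assms(2) by (auto simp: cls_def)
  qed
qed (simp add: tilde_def image_mono)

lemma tilde_tr_eq_iff: "a \<in> S \<Longrightarrow> b \<in> S \<Longrightarrow> tld (tr a) = tld (tr b) \<longleftrightarrow> tr a = tr b"
  using tilde_subset_tilde_tr_iff[OF tr_subset] by blast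

lemma box_min_tilde_tr:
  assumes "Box b \<in> S"
  shows "bmin (tld (tr b)) = tld (tr (Box b))"
proof -
  let ?P = "\<lambda>a. Box a \<in> S \<and> tld (tr b) = tld (tr a)"
  have ex: "\<exists>a. ?P a" using assms by blast
  define c where "c = (SOME a. ?P a)"
  have "?P c" unfolding c_def using someI_ex[OF ex] .
  then have "tr c = tr b"
    using tilde_tr_eq_iff sub_closed_Box[OF closed] assms by metis
  then show ?thesis using ex unfolding box_min_def c_def[symmetric] by simp
qed

lemma box_minE:
  obtains "bmin X = {}"
  | b where "Box b \<in> S" "X = tld (tr b)" "bmin X = tld (tr (Box b))"
proof (cases "\<exists>b. Box b \<in> S \<and> X = tld (tr b)")
  case True
  then show ?thesis using that(2) box_min_tilde_tr by blast
next
  case False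
  then have "bmin X = {}" unfolding box_min_def by (rule if_not_P)
  then show ?thesis by (rule that(1))
qed

lemma box_min_subset:
  assumes "monotonic_nm W B" "Box a \<in> S" "Y \<subseteq> tld (tr a)"
  shows "bmin Y \<subseteq> tld (tr (Box a))"
proof (cases Y rule: box_minE)
  case (2 b)
  from \<open>Y = tld (tr b)\<close> have "tr b \<subseteq> tr a"
    using assms(3) tilde_subset_tilde_tr_iff[OF tr_subset sub_closed_Box[OF closed assms(2)]]
    by simp
  then have "B (tr b) \<subseteq> B (tr a)"
    using assms(1) tr_subset by (simp add: monotonic_nm_def)
  then show ?thesis unfolding \<open>bmin Y = tld (tr (Box b))\<close> tilde_def by (simp add: image_mono)
qed simp

lemma hat_box_min_subset:
  assumes "monotonic_nm W B" "transitive_nm W B" "Box a \<in> S" "Y \<subseteq> tld (tr a)"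
  shows "hat (Wf W B V S) bmin Y \<subseteq> tld (tr (Box a))"
proof (cases "\<exists>Z. Z \<subseteq> Wf W B V S \<and> Y = bmin Z")
  case True
  then obtain Z where Z: "Y = bmin Z" by blast
  show ?thesis
  proof (cases Z rule: box_minE)
    case 1
    then show ?thesis using Z by (simp add: hat_def)
  next
    case (2 c)
    with Z have Y: "Y = tld (tr (Box c))" by simp
    from assms(4) have "tr (Box c) \<subseteq> tr a"
      unfolding Y
      by (rule tilde_subset_tilde_tr_iff[OF tr_subset sub_closed_Box[OF closed assms(3)], THEN iffD1])
    then have "B (tr c) \<subseteq> B (tr a)"
      by (intro box_subset_box_if_box_subset[OF assms(1,2) tr_subset tr_subset]) simp
    then have "Y \<subseteq> tld (tr (Box a))" unfolding Y tilde_def by (simp add: image_mono)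
    with hat_subset show ?thesis by (rule order_trans)
  qed
next
  case False
  then show ?thesis by (auto simp: hat_def)
qed

lemma box_trans_subset:
  assumes "monotonic_nm W B" "transitive_nm W B" "Box a \<in> S" "Y \<subseteq> tld (tr a)"
  shows "box_trans W B V S Y \<subseteq> tld (tr (Box a))"
  using box_min_subset[OF assms(1,3,4)] hat_box_min_subset[OF assms]
  by (simp add: box_trans_def)

lemma box_trans_tilde_tr:
  assumes "monotonic_nm W B" "transitive_nm W B" "Box a \<in> S"
  shows "box_trans W B V S (tld (tr a)) = tld (tr (Box a))"
  using box_trans_subset[OF assms order_refl] box_min_tilde_tr[OF assms(3)]
  by (auto simp: box_trans_def)

end

theorem mainTheorem8:
  fixes W :: "'w set" and B :: "'w set \<Rightarrow> 'w set" and V :: "'v \<Rightarrow> 'w set" and S :: "'v fm set"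
  assumes "nbhd_model W B V"
    and "monotonic_nm W B"
    and "transitive_nm W B"
    and "sub_closed S"
  shows "is_filtration W B V S (supp (Wf W B V S) (box_trans W B V S))"
proof -
  interpret sigma_filtration W B V S
    using assms(1,4) by unfold_locales
  show ?thesis
    unfolding is_filtration_def
  proof (intro allI impI)
    fix a assume "Box a \<in> S"
    note box_trans_eq = box_trans_tilde_tr[OF assms(2,3) this]
    have "supp (Wf W B V S) (box_trans W B V S) (tld (tr a)) = box_trans W B V S (tld (tr a))"
    proof (rule supp_eq_self)
      show "box_trans W B V S Y \<subseteq> box_trans W B V S (tld (tr a))" if "Y \<subseteq> tld (tr a)" for Y
        unfolding box_trans_eq using box_trans_subset[OF assms(2,3) \<open>Box a \<in> S\<close> that] .
    qed
    then show "supp (Wf W B V S) (box_trans W B V S) (tld (tr a)) = tld (tr (Box a))"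
      using box_trans_eq by simp
  qed
qed

end
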